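(* Let $B$ be the regular binary rooted tree (the root has degree two and every other vertex has degree three) with simplicial metric $d_B$. Let $Y$ be a connected graph of bounded degree with simplicial metric $d_Y$. Suppose there exist a map $f:VB\to VY$ from the vertex set of $B$ to the vertex set of $Y$ and a constant $C>0$ such that for all vertices $u,v\in VB$ $$\frac1C d_B(u,v)-C\le d_Y(f(u),f(v))\le C\,d_B(u,v)+C.$$ Then $Y$ is transient (the simple random walk on $Y$ returns to its starting vertex with probability strictly less than 1).
   Context: Simplicial metric: path metric on a graph in which every edge has length one. *)

theory Defs
  imports Complex_Main "HOL-Library.Extended_Nonnegative_Real"
begin

definition simple_graph :: "'a set \<Rightarrow> ('a \<Rightarrow> 'a \<Rightarrow> bool) \<Rightarrow> bool" where
  "simple_graph V E \<longleftrightarrow> (\<forall>u w. E u w \<longrightarrow> u \<in> V \<and> w \<in> V \<and> E w u \<and> u \<noteq> w)"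

definition walk :: "('a \<Rightarrow> 'a \<Rightarrow> bool) \<Rightarrow> 'a list \<Rightarrow> bool" where
  "walk E xs \<longleftrightarrow> xs \<noteq> [] \<and> (\<forall>i. Suc i < length xs \<longrightarrow> E (xs ! i) (xs ! Suc i))"

definition connected_graph :: "'a set \<Rightarrow> ('a \<Rightarrow> 'a \<Rightarrow> bool) \<Rightarrow> bool" where
  "connected_graph V E \<longleftrightarrow>
     (\<forall>u\<in>V. \<forall>v\<in>V. \<exists>xs. walk E xs \<and> hd xs = u \<and> last xs = v)"

definition bounded_degree :: "'a set \<Rightarrow> ('a \<Rightarrow> 'a \<Rightarrow> bool) \<Rightarrow> bool" where
  "bounded_degree V E \<longleftrightarrow> (\<exists>D::nat. \<forall>v\<in>V. finite {w. E v w} \<and> card {w. E v w} \<le> D)"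

definition degree :: "('a \<Rightarrow> 'a \<Rightarrow> bool) \<Rightarrow> 'a \<Rightarrow> nat" where
  "degree E v = card {w. E v w}"

definition gdist :: "('a \<Rightarrow> 'a \<Rightarrow> bool) \<Rightarrow> 'a \<Rightarrow> 'a \<Rightarrow> nat" where
  "gdist E u v = (LEAST n. \<exists>xs. walk E xs \<and> hd xs = u \<and> last xs = v \<and> length xs = Suc n)"

text \<open>Regular binary rooted tree: vertices are finite binary words, root is [],
  the children of w are True#w and False#w.  The root has degree 2, all others degree 3.\<close>
definition tree_adj :: "bool list \<Rightarrow> bool list \<Rightarrow> bool" where
  "tree_adj xs ys \<longleftrightarrow> (\<exists>b. ys = b # xs) \<or> (\<exists>b. xs = b # ys)"

text \<open>Probability that simple random walk started at v first returns to v at time n: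
  sum over walks v = x0,...,xn = v avoiding v at intermediate times of
  the product of the transition probabilities 1/deg(x_i).\<close>
definition first_return_walks :: "('a \<Rightarrow> 'a \<Rightarrow> bool) \<Rightarrow> 'a \<Rightarrow> nat \<Rightarrow> 'a list set" where
  "first_return_walks E v n = {xs. walk E xs \<and> length xs = Suc n \<and> hd xs = v \<and> last xs = v \<and>
      (\<forall>i. 0 < i \<and> i < n \<longrightarrow> xs ! i \<noteq> v)}"

definition first_return_prob :: "('a \<Rightarrow> 'a \<Rightarrow> bool) \<Rightarrow> 'a \<Rightarrow> nat \<Rightarrow> real" where
  "first_return_prob E v n =
     (\<Sum>xs\<in>first_return_walks E v n. \<Prod>i<n. 1 / real (degree E (xs ! i)))"

definition return_prob :: "('a \<Rightarrow> 'a \<Rightarrow> bool) \<Rightarrow> 'a \<Rightarrow> ennreal" where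
  "return_prob E v = (\<Sum>n. ennreal (first_return_prob E v (Suc n)))"

definition transient :: "'a set \<Rightarrow> ('a \<Rightarrow> 'a \<Rightarrow> bool) \<Rightarrow> bool" where
  "transient V E \<longleftrightarrow> (\<forall>v\<in>V. return_prob E v < 1)"

end

theory Submission
  imports Defs "HOL-Analysis.Convex"
begin

text \<open>
  The proof rests on T. Lyons' criterion: a locally finite graph carrying a unit flow of finite
  energy out of a vertex is transient. The binary tree carries such a flow out of its root, split
  evenly at every vertex, so the edge from \<open>u\<close> to a child carries 2^-(|u|+1).
  Sending the flow of each tree edge along a path of bounded length in \<open>Y\<close> between the images
  of its endpoints gives a unit flow out of \<open>f []\<close>; since \<open>f\<close> is coarsely injective, only
  boundedly many of these paths pass through any vertex of \<open>Y\<close>, so the energy stays finite.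
  Adding the flow along a walk from any other vertex to \<open>f []\<close> moves the source.

  By the renewal
  inequality, a return probability equal to one would make the expected number of returns
  unbounded; but summation by parts and Cauchy-Schwarz bound the truncated Green function at the
  source by the energy of the flow.
\<close>

section \<open>Walks\<close>

lemma walk_singleton [simp]: "walk E [x]"
  by (simp add: walk_def)

lemma walk_not_Nil: "walk E xs \<Longrightarrow> xs \<noteq> []"
  by (simp add: walk_def)

lemma walk_Cons_Cons [simp]: "walk E (x # y # xs) \<longleftrightarrow> E x y \<and> walk E (y # xs)"
  unfolding walk_def by (auto simp: nth_Cons' less_Suc_eq_0_disj)

lemma walk_append:
  assumes "walk E xs" "walk E ys" "E (last xs) (hd ys)"
  shows "walk E (xs @ ys)"
  using assms
proof (induction xs rule: induct_list012)
  case (2 x)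
  then show ?case using walk_not_Nil by (cases ys) auto
qed auto

lemma walk_snoc_iff: "xs \<noteq> [] \<Longrightarrow> walk E (xs @ [y]) \<longleftrightarrow> walk E xs \<and> E (last xs) y"
  by (induction xs rule: induct_list012) auto

lemma walk_append_tl:
  assumes "walk E xs" "walk E ys" "last xs = hd ys"
  shows "walk E (xs @ tl ys)"
proof -
  obtain y zs where ys: "ys = y # zs"
    using walk_not_Nil[OF assms(2)] by (cases ys) auto
  show ?thesis
  proof (cases zs)
    case Nil
    then show ?thesis using assms ys by simp
  next
    case (Cons z zs')
    then show ?thesis using assms ys walk_append[of E xs zs] by auto
  qed
qed

lemma walk_rev:
  assumes "symp E" and "walk E xs"
  shows "walk E (rev xs)"
  using assms(2)
proof (induction xs rule: induct_list012)
  case (3 x y zs)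
  then show ?case using walk_append[of E "rev (y # zs)" "[x]"] sympD[OF \<open>symp E\<close>] by auto
qed auto

lemma walk_take: "walk E xs \<Longrightarrow> 0 < n \<Longrightarrow> walk E (take n xs)"
  unfolding walk_def by auto

lemma walk_joinE:
  assumes "symp E" and "walk E xs" "walk E ys" "last xs = last ys"
  obtains zs where "walk E zs" "hd zs = hd xs" "last zs = hd ys"
    "length zs = length xs + length ys - 1"
proof
  have ne: "xs \<noteq> []" "ys \<noteq> []"
    using assms(2,3) walk_not_Nil by auto
  show "walk E (xs @ tl (rev ys))"
    using walk_append_tl[OF assms(2) walk_rev[OF assms(1,3)]] assms(4) ne by (simp add: hd_rev)
  show "hd (xs @ tl (rev ys)) = hd xs"
    using ne by simp
  obtain z zs where rev_ys: "rev ys = z # zs"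
    using ne by (cases "rev ys") auto
  then have "z = last xs" "hd ys = last (z # zs)"
    using assms(4) ne by (metis hd_rev list.sel(1), metis last_rev)
  then show "last (xs @ tl (rev ys)) = hd ys"
    using rev_ys ne by (cases zs) auto
  show "length (xs @ tl (rev ys)) = length xs + length ys - 1"
    using ne by (cases ys) auto
qed

lemma gdist_le_walk:
  assumes "walk E xs" "hd xs = u" "last xs = v"
  shows "gdist E u v \<le> length xs - 1"
proof -
  have "length xs = Suc (length xs - 1)"
    using walk_not_Nil[OF assms(1)] by (cases xs) auto
  then show ?thesis
    unfolding gdist_def using assms by (intro Least_le) metis
qed

lemma shortest_walkE:
  assumes "walk E xs" "hd xs = u" "last xs = v"
  obtains ys where "walk E ys" "hd ys = u" "last ys = v" "length ys = Suc (gdist E u v)"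
proof -
  have "length xs = Suc (length xs - 1)"
    using walk_not_Nil[OF assms(1)] by (cases xs) auto
  then have "\<exists>n ys. walk E ys \<and> hd ys = u \<and> last ys = v \<and> length ys = Suc n"
    using assms by blast
  then have "\<exists>ys. walk E ys \<and> hd ys = u \<and> last ys = v \<and> length ys = Suc (gdist E u v)"
    unfolding gdist_def by (rule LeastI_ex)
  then show ?thesis
    using that by blast
qed

definition locally_finite :: "('a \<Rightarrow> 'a \<Rightarrow> bool) \<Rightarrow> bool" where
  "locally_finite E \<longleftrightarrow> (\<forall>v. finite {w. E v w})"

definition walks_from :: "('a \<Rightarrow> 'a \<Rightarrow> bool) \<Rightarrow> nat \<Rightarrow> 'a \<Rightarrow> 'a list set" where
  "walks_from E n a = {xs. walk E xs \<and> length xs = Suc n \<and> hd xs = a}"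

lemma walks_from_0: "walks_from E 0 a = {[a]}"
  unfolding walks_from_def by (auto simp: length_Suc_conv)

lemma walks_from_Suc:
  "walks_from E (Suc n) a = (\<lambda>(y, xs). a # xs) ` (SIGMA y:{y. E a y}. walks_from E n y)"
proof (intro equalityI subsetI)
  fix xs
  assume "xs \<in> walks_from E (Suc n) a"
  then obtain y ys where "xs = a # y # ys" "E a y" "y # ys \<in> walks_from E n y"
    unfolding walks_from_def by (cases xs; cases "tl xs") auto
  then show "xs \<in> (\<lambda>(y, xs). a # xs) ` (SIGMA y:{y. E a y}. walks_from E n y)"
    by force
next
  fix xs
  assume "xs \<in> (\<lambda>(y, xs). a # xs) ` (SIGMA y:{y. E a y}. walks_from E n y)"
  then show "xs \<in> walks_from E (Suc n) a"
    unfolding walks_from_def by (auto simp: length_Suc_conv)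
qed

lemma finite_walks_from:
  assumes "locally_finite E"
  shows "finite (walks_from E n a)"
  using assms
  by (induction n arbitrary: a) (auto simp: walks_from_0 walks_from_Suc locally_finite_def)

lemma card_walks_from_le:
  assumes fin: "locally_finite E" and deg: "\<And>v. card {w. E v w} \<le> D"
  shows "card (walks_from E n a) \<le> D ^ n"
proof (induction n arbitrary: a)
  case 0
  then show ?case by (simp add: walks_from_0)
next
  case (Suc n)
  have "card (walks_from E (Suc n) a) \<le> card (SIGMA y:{y. E a y}. walks_from E n y)"
    unfolding walks_from_Suc
    using fin by (intro card_image_le finite_SigmaI finite_walks_from) (auto simp: locally_finite_def)
  also have "\<dots> = (\<Sum>y | E a y. card (walks_from E n y))"
    using fin finite_walks_from[OF fin] by (intro card_SigmaI) (auto simp: locally_finite_def)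
  also have "\<dots> \<le> (\<Sum>y | E a y. D ^ n)"
    by (intro sum_mono Suc.IH)
  also have "\<dots> \<le> D * D ^ n"
    using deg[of a] by simp
  finally show ?case by simp
qed

section \<open>Transition probabilities and the renewal inequality\<close>

fun walk_weight :: "('a \<Rightarrow> 'a \<Rightarrow> bool) \<Rightarrow> 'a list \<Rightarrow> real" where
  "walk_weight E (x # y # xs) = walk_weight E (y # xs) / real (degree E x)"
| "walk_weight E _ = 1"

lemma walk_weight_nonneg: "0 \<le> walk_weight E xs"
  by (induction E xs rule: walk_weight.induct) auto

lemma walk_weight_eq_prod:
  "walk_weight E xs = (\<Prod>i<length xs - 1. 1 / real (degree E (xs ! i)))"
  by (induction xs rule: induct_list012) (simp_all add: prod.lessThan_Suc_shift del: prod.lessThan_Suc)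

lemma walk_weight_append_tl:
  assumes "xs \<noteq> []" "last xs = hd ys"
  shows "walk_weight E (xs @ tl ys) = walk_weight E xs * walk_weight E ys"
  using assms
proof (induction xs rule: induct_list012)
  case (2 x)
  then show ?case by (cases ys) auto
qed auto

lemma walk_weight_snoc:
  "xs \<noteq> [] \<Longrightarrow> walk_weight E (xs @ [x]) = walk_weight E xs / real (degree E (last xs))"
  using walk_weight_append_tl[of xs "[last xs, x]" E] by simp

definition walks_between :: "('a \<Rightarrow> 'a \<Rightarrow> bool) \<Rightarrow> nat \<Rightarrow> 'a \<Rightarrow> 'a \<Rightarrow> 'a list set" where
  "walks_between E n a x = {xs \<in> walks_from E n a. last xs = x}"

definition transition_prob :: "('a \<Rightarrow> 'a \<Rightarrow> bool) \<Rightarrow> nat \<Rightarrow> 'a \<Rightarrow> 'a \<Rightarrow> real" where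
  "transition_prob E n a x = (\<Sum>xs\<in>walks_between E n a x. walk_weight E xs)"

lemma transition_prob_nonneg: "0 \<le> transition_prob E n a x"
  unfolding transition_prob_def by (intro sum_nonneg walk_weight_nonneg)

lemma walks_between_0: "walks_between E 0 a x = (if x = a then {[a]} else {})"
  by (auto simp: walks_between_def walks_from_0)

lemma transition_prob_0: "transition_prob E 0 a x = (if x = a then 1 else 0)"
  by (simp add: transition_prob_def walks_between_0)

lemma finite_walks_between:
  assumes "locally_finite E"
  shows "finite (walks_between E n a x)"
  unfolding walks_between_def using finite_walks_from[OF assms] by simp

lemma walks_between_Suc:
  assumes "symp E"
  shows "walks_between E (Suc n) a x = (\<lambda>(y, xs). xs @ [x]) ` (SIGMA y:{y. E x y}. walks_between E n a y)"
proof (intro equalityI subsetI)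
  fix zs
  assume zs: "zs \<in> walks_between E (Suc n) a x"
  define xs where "xs = butlast zs"
  have xs: "zs = xs @ [x]" "xs \<noteq> []"
    using zs unfolding xs_def walks_between_def walks_from_def
    by (auto simp flip: length_greater_0_conv)
  then have "(last xs, xs) \<in> (SIGMA y:{y. E x y}. walks_between E n a y)"
    using zs sympD[OF assms] by (auto simp: walks_between_def walks_from_def walk_snoc_iff)
  then show "zs \<in> (\<lambda>(y, xs). xs @ [x]) ` (SIGMA y:{y. E x y}. walks_between E n a y)"
    using xs by force
next
  fix zs
  assume "zs \<in> (\<lambda>(y, xs). xs @ [x]) ` (SIGMA y:{y. E x y}. walks_between E n a y)"
  then show "zs \<in> walks_between E (Suc n) a x"
    using sympD[OF assms] walk_not_Nil by (fastforce simp: walks_between_def walks_from_def walk_snoc_iff)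
qed

lemma transition_prob_Suc:
  assumes "symp E" and fin: "locally_finite E"
  shows "transition_prob E (Suc n) a x = (\<Sum>y | E x y. transition_prob E n a y / real (degree E y))"
proof -
  have inj: "inj_on (\<lambda>(y, xs). xs @ [x]) (SIGMA y:{y. E x y}. walks_between E n a y)"
    by (auto intro!: inj_onI simp: walks_between_def)
  have "transition_prob E (Suc n) a x =
      (\<Sum>p\<in>(SIGMA y:{y. E x y}. walks_between E n a y). walk_weight E ((\<lambda>(y, xs). xs @ [x]) p))"
    unfolding transition_prob_def walks_between_Suc[OF \<open>symp E\<close>]
    by (rule sum.reindex[OF inj, unfolded comp_def])
  also have "\<dots> = (\<Sum>(y, xs)\<in>(SIGMA y:{y. E x y}. walks_between E n a y). walk_weight E xs / real (degree E y))"
    by (intro sum.cong) (auto simp: walk_weight_snoc[OF walk_not_Nil] walks_between_def walks_from_def)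
  also have "\<dots> = (\<Sum>y | E x y. transition_prob E n a y / real (degree E y))"
    using fin finite_walks_between[OF fin] unfolding locally_finite_def
    by (subst sum.Sigma[symmetric]) (auto simp: transition_prob_def sum_divide_distrib)
  finally show ?thesis .
qed

lemma first_return_prob_eq:
  "first_return_prob E a n = (\<Sum>xs\<in>first_return_walks E a n. walk_weight E xs)"
  unfolding first_return_prob_def
  by (intro sum.cong) (auto simp: first_return_walks_def walk_weight_eq_prod)

lemma first_return_time_unique:
  assumes "ys \<in> first_return_walks E a (Suc k)" "ys' \<in> first_return_walks E a (Suc k')"
    and "ys @ zs = ys' @ zs'"
  shows "k = k'"
proof -
  have "\<not> k < k'"
    if "ys \<in> first_return_walks E a (Suc k)" "ys' \<in> first_return_walks E a (Suc k')"
      and "ys @ zs = ys' @ zs'" for ys ys' zs zs' and k k' :: nat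
  proof
    assume "k < k'"
    have len: "length ys = Suc (Suc k)" and last: "last ys = a"
      using that(1) by (simp_all add: first_return_walks_def)
    have "ys' ! Suc k = (ys @ zs) ! Suc k"
      using that(2,3) \<open>k < k'\<close> by (auto simp: first_return_walks_def nth_append)
    also have "\<dots> = last ys"
      using len by (cases ys rule: rev_exhaust) (auto simp: nth_append)
    also note last
    finally show False
      using that(2) \<open>k < k'\<close> by (auto simp: first_return_walks_def)
  qed
  then show ?thesis
    using assms by (metis linorder_neqE_nat)
qed

lemma first_return_concat_mem:
  assumes "ys \<in> first_return_walks E a (Suc k)" "zs \<in> walks_between E m a a"
  shows "ys @ tl zs \<in> walks_between E (Suc k + m) a a"
proof -
  have ys: "walk E ys" "length ys = Suc (Suc k)" "hd ys = a" "last ys = a"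
    using assms(1) by (auto simp: first_return_walks_def)
  have zs: "walk E zs" "length zs = Suc m" "hd zs = a" "last zs = a"
    using assms(2) by (auto simp: walks_between_def walks_from_def)
  have "walk E (ys @ tl zs)"
    using ys zs by (intro walk_append_tl) auto
  moreover have "ys \<noteq> []"
    using ys by auto
  moreover have "last (ys @ tl zs) = a"
    using ys zs by (cases "tl zs = []") (auto simp: last_tl[symmetric])
  ultimately show ?thesis
    using ys zs by (auto simp: walks_between_def walks_from_def)
qed

lemma first_return_concat_inj:
  assumes "ys \<in> first_return_walks E a (Suc k)" "ys' \<in> first_return_walks E a (Suc k')"
    and "zs \<in> walks_between E m a a" "zs' \<in> walks_between E m' a a"
    and eq: "ys @ tl zs = ys' @ tl zs'"
  shows "k = k' \<and> ys = ys' \<and> zs = zs'"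
proof -
  have "k = k'"
    using assms(1,2) eq by (rule first_return_time_unique)
  then have "length ys = length ys'"
    using assms(1,2) by (simp add: first_return_walks_def)
  then have "ys = ys'" "tl zs = tl zs'"
    using eq by simp_all
  moreover have "zs \<noteq> []" "zs' \<noteq> []" "hd zs = hd zs'"
    using assms(3,4) walk_not_Nil by (auto simp: walks_between_def walks_from_def)
  ultimately show ?thesis
    using \<open>k = k'\<close> by (metis list.expand)
qed

lemma renewal_inequality:
  assumes fin: "locally_finite E"
  shows "(\<Sum>k<n. first_return_prob E a (Suc k) * transition_prob E (n - Suc k) a a)
    \<le> transition_prob E n a a"
proof -
  define P where "P = (SIGMA k:{..<n}. first_return_walks E a (Suc k) \<times> walks_between E (n - Suc k) a a)"
  define glue where "glue = (\<lambda>(k::nat, ys::'a list, zs). ys @ tl zs)"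
  have fin_first_return: "finite (first_return_walks E a m)" for m
    by (rule finite_subset[OF _ finite_walks_between[OF fin, of m a a]])
      (auto simp: first_return_walks_def walks_between_def walks_from_def)
  have glue_mem: "glue p \<in> walks_between E n a a" if p: "p \<in> P" for p
  proof -
    obtain k ys zs where "p = (k, ys, zs)" "k < n"
      and "ys \<in> first_return_walks E a (Suc k)" "zs \<in> walks_between E (n - Suc k) a a"
      using p by (cases p) (auto simp: P_def)
    then show ?thesis
      using first_return_concat_mem[of ys E a k zs "n - Suc k"] by (simp add: glue_def)
  qed
  have "inj_on glue P"
  proof (rule inj_onI)
    fix p p'
    assume "p \<in> P" "p' \<in> P" and eq: "glue p = glue p'"
    obtain k ys zs k' ys' zs' where "p = (k, ys, zs)" "p' = (k', ys', zs')"
      by (cases p, cases p')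
    with \<open>p \<in> P\<close> \<open>p' \<in> P\<close> eq first_return_concat_inj[of ys E a k ys' k' zs "n - Suc k" zs' "n - Suc k'"]
    show "p = p'"
      by (simp add: P_def glue_def)
  qed
  have weight_glue: "walk_weight E ys * walk_weight E zs = walk_weight E (glue (k, ys, zs))"
    if "(k, ys, zs) \<in> P" for k ys zs
  proof -
    have "ys \<noteq> []" "last ys = hd zs"
      using that by (auto simp: P_def first_return_walks_def walks_between_def walks_from_def)
    then show ?thesis
      by (simp add: glue_def walk_weight_append_tl)
  qed
  have "(\<Sum>k<n. first_return_prob E a (Suc k) * transition_prob E (n - Suc k) a a)
      = (\<Sum>(k, ys, zs)\<in>P. walk_weight E ys * walk_weight E zs)"
    unfolding P_def first_return_prob_eq transition_prob_def sum_product sum.cartesian_product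
    using fin_first_return finite_walks_between[OF fin] by (intro sum.Sigma) auto
  also have "\<dots> = (\<Sum>p\<in>P. walk_weight E (glue p))"
    using weight_glue by (intro sum.cong) auto
  also have "\<dots> = (\<Sum>xs\<in>glue ` P. walk_weight E xs)"
    by (rule sum.reindex[OF \<open>inj_on glue P\<close>, symmetric, unfolded comp_def])
  also have "\<dots> \<le> transition_prob E n a a"
    unfolding transition_prob_def using glue_mem
    by (intro sum_mono2 finite_walks_between fin walk_weight_nonneg) auto
  finally show ?thesis .
qed

lemma renewal_partial_sums:
  fixes F p :: "nat \<Rightarrow> real"
  assumes p0: "p 0 = 1" and renewal: "\<And>n. (\<Sum>k<n. F (Suc k) * p (n - Suc k)) \<le> p n"
  shows "1 + (\<Sum>k<M. F (Suc k) * (\<Sum>j<M - k. p j)) \<le> (\<Sum>j<Suc M. p j)"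
proof (induction M)
  case 0
  then show ?case by (simp add: p0)
next
  case (Suc M)
  have "(\<Sum>k<Suc M. F (Suc k) * (\<Sum>j<Suc M - k. p j))
      = (\<Sum>k<Suc M. F (Suc k) * (\<Sum>j<M - k. p j)) + (\<Sum>k<Suc M. F (Suc k) * p (M - k))"
    by (simp add: Suc_diff_le distrib_left sum.distrib)
  also have "(\<Sum>k<Suc M. F (Suc k) * (\<Sum>j<M - k. p j)) = (\<Sum>k<M. F (Suc k) * (\<Sum>j<M - k. p j))"
    by simp
  also have "(\<Sum>k<Suc M. F (Suc k) * p (M - k)) \<le> p (Suc M)"
    using renewal[of "Suc M"] by simp
  finally show ?case
    using Suc.IH by simp
qed

text \<open>With \<open>G = (\<Sum>n. p n)\<close> the renewal inequality yields \<open>G \<ge> 1 + (\<Sum>k. F (Suc k)) * G\<close>,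
  hence \<open>(\<Sum>k. F (Suc k)) \<le> 1 - 1 / G < 1\<close>.\<close>

lemma renewal_sum_lt_1:
  fixes F p :: "nat \<Rightarrow> real"
  assumes F_nonneg: "\<And>k. 0 \<le> F k" and p_nonneg: "\<And>n. 0 \<le> p n" and p0: "p 0 = 1"
    and renewal: "\<And>n. (\<Sum>k<n. F (Suc k) * p (n - Suc k)) \<le> p n"
    and bounded: "\<And>N. (\<Sum>n<N. p n) \<le> B"
  shows "(\<Sum>n. ennreal (F (Suc n))) < 1"
proof -
  define S where "S N = (\<Sum>n<N. p n)" for N
  have S_mono: "S N \<le> S N'" if "N \<le> N'" for N N'
    unfolding S_def using that p_nonneg by (intro sum_mono2) auto
  have "summable p"
    using bounded[of "Suc _"] p_nonneg by (intro bounded_imp_summable) (auto simp: lessThan_Suc_atMost)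
  define s where "s = suminf p"
  have S_le: "S N \<le> s" for N
    unfolding S_def s_def using \<open>summable p\<close> p_nonneg by (intro sum_le_suminf) auto
  have "1 \<le> s"
    using S_le[of 1] p0 by (simp add: S_def)
  have "(\<Sum>k<K. F (Suc k)) * s \<le> s - 1" for K
  proof -
    have "(\<Sum>k<K. F (Suc k)) * S N \<le> s - 1" for N
    proof -
      have "(\<Sum>k<K. F (Suc k)) * S N \<le> (\<Sum>k<K. F (Suc k) * S (N + K - k))"
        unfolding sum_distrib_right using F_nonneg by (intro sum_mono mult_left_mono S_mono) auto
      also have "\<dots> \<le> (\<Sum>k<N + K. F (Suc k) * S (N + K - k))"
        using F_nonneg S_mono[of 0] by (intro sum_mono2) (auto simp: S_def)
      also have "\<dots> \<le> S (Suc (N + K)) - 1"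
        using renewal_partial_sums[OF p0 renewal, of "N + K"] by (simp add: S_def)
      finally show ?thesis
        using S_le[of "Suc (N + K)"] by simp
    qed
    then have "(\<Sum>n. (\<Sum>k<K. F (Suc k)) * p n) \<le> s - 1"
      using \<open>summable p\<close> by (intro suminf_le_const summable_mult) (simp_all add: S_def sum_distrib_left)
    then show ?thesis
      using suminf_mult[OF \<open>summable p\<close>] by (simp add: s_def)
  qed
  then have partial: "(\<Sum>k<K. F (Suc k)) \<le> (s - 1) / s" for K
    using \<open>1 \<le> s\<close> by (simp add: field_simps)
  have "(\<Sum>n. ennreal (F (Suc n))) \<le> ennreal ((s - 1) / s)"
    using partial F_nonneg by (intro suminf_le_const) (auto intro!: ennreal_leI)
  also have "\<dots> < 1"
    using \<open>1 \<le> s\<close> by (simp add: ennreal_less_iff ennreal_1[symmetric] del: ennreal_1)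
  finally show ?thesis .
qed

section \<open>Unit flows of finite energy force transience\<close>

definition unit_flow :: "('a \<Rightarrow> 'a \<Rightarrow> bool) \<Rightarrow> 'a \<Rightarrow> ('a \<Rightarrow> 'a \<Rightarrow> real) \<Rightarrow> bool" where
  "unit_flow E a \<theta> \<longleftrightarrow>
     (\<forall>x y. E x y \<longrightarrow> \<theta> y x = - \<theta> x y) \<and> (\<forall>x. (\<Sum>y | E x y. \<theta> x y) = (if x = a then 1 else 0))"

definition finite_energy :: "('a \<Rightarrow> 'a \<Rightarrow> bool) \<Rightarrow> ('a \<Rightarrow> 'a \<Rightarrow> real) \<Rightarrow> bool" where
  "finite_energy E \<theta> \<longleftrightarrow> (\<exists>K. \<forall>Q. finite Q \<and> Q \<subseteq> {(x, y). E x y} \<longrightarrow> (\<Sum>(x, y)\<in>Q. (\<theta> x y)\<^sup>2) \<le> K)"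

lemma unit_flow_antisym: "unit_flow E a \<theta> \<Longrightarrow> E x y \<Longrightarrow> \<theta> y x = - \<theta> x y"
  unfolding unit_flow_def by blast

lemma unit_flow_divergence: "unit_flow E a \<theta> \<Longrightarrow> (\<Sum>y | E x y. \<theta> x y) = (if x = a then 1 else 0)"
  unfolding unit_flow_def by blast

lemma finite_edges_touching:
  assumes "symp E" "locally_finite E" "finite A"
  shows "finite {(x, y). E x y \<and> (x \<in> A \<or> y \<in> A)}"
proof -
  define S where "S = (SIGMA x:A. {y. E x y})"
  have "finite S"
    using assms(2,3) by (auto simp: S_def locally_finite_def)
  moreover have "{(x, y). E x y \<and> (x \<in> A \<or> y \<in> A)} \<subseteq> S \<union> prod.swap ` S"
    using sympD[OF \<open>symp E\<close>] by (auto simp: S_def image_iff)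
  ultimately show ?thesis
    using finite_subset by blast
qed

lemma sum_by_parts_graph:
  fixes w :: "'a \<Rightarrow> real" and h :: "'a \<Rightarrow> 'a \<Rightarrow> real"
  assumes "symp E" "locally_finite E" "finite A" and w_zero: "\<And>x. x \<notin> A \<Longrightarrow> w x = 0"
    and antisym: "\<And>x y. E x y \<Longrightarrow> h y x = - h x y"
  defines "Q \<equiv> {(x, y). E x y \<and> (x \<in> A \<or> y \<in> A)}"
  shows "(\<Sum>x\<in>A. w x * (\<Sum>y | E x y. h x y)) = (\<Sum>(x, y)\<in>Q. (w x - w y) * h x y) / 2"
proof -
  define S where "S = (SIGMA x:A. {y. E x y})"
  have fin_Q: "finite Q"
    unfolding Q_def using assms(1-3) by (rule finite_edges_touching)
  have swap_Q: "prod.swap ` Q = Q"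
    using sympD[OF \<open>symp E\<close>] by (auto simp: Q_def)
  have "(\<Sum>x\<in>A. w x * (\<Sum>y | E x y. h x y)) = (\<Sum>(x, y)\<in>S. w x * h x y)"
    unfolding S_def sum_distrib_left
    using assms(2,3) by (subst sum.Sigma) (auto simp: locally_finite_def)
  also have "\<dots> = (\<Sum>(x, y)\<in>Q. w x * h x y)"
    using w_zero by (intro sum.mono_neutral_left fin_Q) (auto simp: S_def Q_def split: prod.splits)
  finally have lhs: "(\<Sum>x\<in>A. w x * (\<Sum>y | E x y. h x y)) = (\<Sum>(x, y)\<in>Q. w x * h x y)" .
  have "(\<Sum>(x, y)\<in>Q. w y * h x y) = (\<Sum>(x, y)\<in>prod.swap ` Q. w x * h y x)"
    by (simp add: sum.reindex split_def)
  also have "\<dots> = - (\<Sum>(x, y)\<in>Q. w x * h x y)"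
    unfolding swap_Q using antisym by (auto simp: Q_def sum_negf[symmetric] intro!: sum.cong)
  finally show ?thesis
    unfolding lhs by (simp add: left_diff_distrib sum_subtractf split_def)
qed

text \<open>Summation by parts gives \<open>2 * w a = (\<Sum>(x, y). (w x - w y) * \<theta> x y)\<close> and, by
  superharmonicity, \<open>(\<Sum>(x, y). (w x - w y)\<^sup>2) \<le> 2 * w a\<close>; Cauchy-Schwarz concludes.\<close>

lemma superharmonic_value_le_energy:
  fixes w :: "'a \<Rightarrow> real"
  assumes "symp E" "locally_finite E" "finite A" "\<And>x. x \<notin> A \<Longrightarrow> w x = 0" "\<And>x. 0 \<le> w x"
    and superharmonic: "\<And>x. (\<Sum>y | E x y. w x - w y) \<le> (if x = a then 1 else 0)"
    and flow: "unit_flow E a \<theta>"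
    and energy: "\<And>Q. finite Q \<Longrightarrow> Q \<subseteq> {(x, y). E x y} \<Longrightarrow> (\<Sum>(x, y)\<in>Q. (\<theta> x y)\<^sup>2) \<le> K"
  shows "w a \<le> K / 2"
proof -
  define Q where "Q = {(x, y). E x y \<and> (x \<in> A \<or> y \<in> A)}"
  have by_parts: "(\<Sum>x\<in>A. w x * (\<Sum>y | E x y. h x y)) = (\<Sum>(x, y)\<in>Q. (w x - w y) * h x y) / 2"
    if "\<And>x y. E x y \<Longrightarrow> h y x = - h x y" for h
    unfolding Q_def using assms(1-4) that by (rule sum_by_parts_graph)
  have delta: "(\<Sum>x\<in>A. w x * (if x = a then 1 else 0)) = w a"
    using assms(3,4) by (simp add: if_distrib cong: if_cong)
  have "finite Q"
    unfolding Q_def using assms(1-3) by (rule finite_edges_touching)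
  have "(\<Sum>x\<in>A. w x * (\<Sum>y | E x y. \<theta> x y)) = (\<Sum>(x, y)\<in>Q. (w x - w y) * \<theta> x y) / 2"
    using unit_flow_antisym[OF flow] by (rule by_parts)
  also have "(\<Sum>x\<in>A. w x * (\<Sum>y | E x y. \<theta> x y)) = w a"
    by (simp add: unit_flow_divergence[OF flow] delta)
  finally have flux: "2 * w a = (\<Sum>(x, y)\<in>Q. (w x - w y) * \<theta> x y)"
    by simp
  have dirichlet: "(\<Sum>(x, y)\<in>Q. (w x - w y)\<^sup>2) \<le> 2 * w a"
  proof -
    have "(\<Sum>x\<in>A. w x * (\<Sum>y | E x y. w x - w y)) = (\<Sum>(x, y)\<in>Q. (w x - w y) * (w x - w y)) / 2"
      by (rule by_parts) simp
    then have "(\<Sum>(x, y)\<in>Q. (w x - w y)\<^sup>2) = 2 * (\<Sum>x\<in>A. w x * (\<Sum>y | E x y. w x - w y))"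
      by (simp add: power2_eq_square)
    also have "\<dots> \<le> 2 * (\<Sum>x\<in>A. w x * (if x = a then 1 else 0))"
      using assms(5) superharmonic by (intro mult_left_mono sum_mono) auto
    finally show ?thesis
      by (simp add: delta)
  qed
  have "(2 * w a)\<^sup>2 \<le> (\<Sum>(x, y)\<in>Q. (w x - w y)\<^sup>2) * (\<Sum>(x, y)\<in>Q. (\<theta> x y)\<^sup>2)"
    unfolding flux using Cauchy_Schwarz_ineq_sum[of "\<lambda>(x, y). w x - w y" "\<lambda>(x, y). \<theta> x y" Q]
    by (simp add: split_def)
  also have "\<dots> \<le> 2 * w a * K"
    using dirichlet energy[OF \<open>finite Q\<close>] assms(5)[of a]
    by (intro mult_mono) (auto simp: Q_def intro: sum_nonneg)
  finally have "2 * w a * (2 * w a) \<le> 2 * w a * K"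
    by (simp add: power2_eq_square)
  moreover have "0 \<le> K"
    using energy[of "{}"] by simp
  ultimately show ?thesis
    using assms(5)[of a] by (cases "w a = 0") (simp_all add: mult_le_cancel_left_pos)
qed

definition green :: "('a \<Rightarrow> 'a \<Rightarrow> bool) \<Rightarrow> nat \<Rightarrow> 'a \<Rightarrow> 'a \<Rightarrow> real" where
  "green E N a x = (\<Sum>n<N. transition_prob E n a x)"

lemma green_nonneg: "0 \<le> green E N a x"
  by (simp add: green_def sum_nonneg transition_prob_nonneg)

lemma finite_green_support:
  assumes "locally_finite E"
  shows "finite {x. green E N a x \<noteq> 0}"
proof (rule finite_subset)
  show "{x. green E N a x \<noteq> 0} \<subseteq> last ` (\<Union>n<N. walks_from E n a)"
  proof
    fix x
    assume "x \<in> {x. green E N a x \<noteq> 0}"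
    then obtain n where "n < N" "transition_prob E n a x \<noteq> 0"
      unfolding green_def by (auto elim: sum.not_neutral_contains_not_neutral)
    then obtain xs where "xs \<in> walks_from E n a" "last xs = x"
      unfolding transition_prob_def walks_between_def by (auto elim: sum.not_neutral_contains_not_neutral)
    with \<open>n < N\<close> show "x \<in> last ` (\<Union>n<N. walks_from E n a)"
      by blast
  qed
  show "finite (last ` (\<Union>n<N. walks_from E n a))"
    using finite_walks_from[OF assms] by simp
qed

lemma green_superharmonic:
  assumes "symp E" "locally_finite E"
  shows "(\<Sum>y | E x y. green E N a x / degree E x - green E N a y / degree E y) \<le> (if x = a then 1 else 0)"
proof (cases "degree E x = 0")
  case True
  then have "{y. E x y} = {}"
    using assms(2) by (simp add: degree_def locally_finite_def)
  then show ?thesis by simp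
next
  case False
  have "(\<Sum>y | E x y. green E N a x / degree E x) = (\<Sum>n<N. transition_prob E n a x)"
    using False by (simp add: green_def degree_def)
  moreover have "(\<Sum>y | E x y. green E N a y / degree E y) = (\<Sum>n<N. transition_prob E (Suc n) a x)"
    unfolding green_def transition_prob_Suc[OF assms] sum_divide_distrib by (rule sum.swap)
  ultimately have "(\<Sum>y | E x y. green E N a x / degree E x - green E N a y / degree E y)
      = transition_prob E 0 a x - transition_prob E N a x"
    using sum_lessThan_telescope'[of "\<lambda>n. transition_prob E n a x" N] by (simp add: sum_subtractf)
  then show ?thesis
    using transition_prob_nonneg[of E N a x] by (simp add: transition_prob_0)
qed

lemma green_le_energy:
  fixes \<theta> :: "'a \<Rightarrow> 'a \<Rightarrow> real" and K :: real
  assumes "symp E" "locally_finite E" and flow: "unit_flow E a \<theta>"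
    and energy: "\<And>Q. finite Q \<Longrightarrow> Q \<subseteq> {(x, y). E x y} \<Longrightarrow> (\<Sum>(x, y)\<in>Q. (\<theta> x y)\<^sup>2) \<le> K"
  shows "green E N a a \<le> real (degree E a) * K / 2"
proof -
  define w where "w x = green E N a x / degree E x" for x
  have "w a \<le> K / 2"
  proof (rule superharmonic_value_le_energy[OF assms(1,2) finite_green_support[OF assms(2)]])
    show "w x = 0" if "x \<notin> {x. green E N a x \<noteq> 0}" for x
      using that by (simp add: w_def)
    show "0 \<le> w x" for x
      by (simp add: w_def green_nonneg)
    show "(\<Sum>y | E x y. w x - w y) \<le> (if x = a then 1 else 0)" for x
      unfolding w_def using assms(1,2) by (rule green_superharmonic)
  qed (use flow energy in auto)
  moreover have "{y. E a y} \<noteq> {}"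
    using unit_flow_divergence[OF flow, of a] by (cases "{y. E a y} = {}") auto
  then have "degree E a \<noteq> 0"
    using assms(2) by (simp add: degree_def locally_finite_def)
  ultimately show ?thesis
    by (simp add: w_def field_simps)
qed

theorem return_prob_lt_1_if_finite_energy_flow:
  assumes "symp E" "locally_finite E" "unit_flow E a \<theta>" "finite_energy E \<theta>"
  shows "return_prob E a < 1"
proof -
  obtain K where energy: "\<And>Q. finite Q \<Longrightarrow> Q \<subseteq> {(x, y). E x y} \<Longrightarrow> (\<Sum>(x, y)\<in>Q. (\<theta> x y)\<^sup>2) \<le> K"
    using assms(4) unfolding finite_energy_def by blast
  show ?thesis
    unfolding return_prob_def
  proof (rule renewal_sum_lt_1[where p = "\<lambda>n. transition_prob E n a a" and B = "real (degree E a) * K / 2"])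
    show "0 \<le> first_return_prob E a k" for k
      by (simp add: first_return_prob_eq sum_nonneg walk_weight_nonneg)
    show "(\<Sum>n<N. transition_prob E n a a) \<le> real (degree E a) * K / 2" for N
      using green_le_energy[OF assms(1-3) energy] by (simp add: green_def)
  qed (simp_all add: transition_prob_nonneg transition_prob_0 renewal_inequality[OF assms(2)])
qed

section \<open>The unit flow along a walk\<close>

fun walk_flow :: "'a list \<Rightarrow> 'a \<Rightarrow> 'a \<Rightarrow> real" where
  "walk_flow (x # y # xs) p q =
     (if p = x \<and> q = y then 1 else 0) - (if p = y \<and> q = x then 1 else 0) + walk_flow (y # xs) p q"
| "walk_flow _ p q = 0"

lemma walk_flow_antisym: "walk_flow xs q p = - walk_flow xs p q"
proof (induction xs p q rule: walk_flow.induct)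
  case (1 x y xs p q)
  have "(if q = x \<and> p = y then 1 else 0) - (if q = y \<and> p = x then 1 else 0)
      = - ((if p = x \<and> q = y then 1 else 0) - (if p = y \<and> q = x then 1 else 0 :: real))"
    by (cases "p = x"; cases "q = y"; cases "p = y"; cases "q = x"; simp)
  with "1" show ?case
    unfolding walk_flow.simps by linarith
qed simp_all

lemma walk_flow_nonzero_imp_mem:
  assumes "walk_flow xs p q \<noteq> 0"
  shows "p \<in> set xs \<and> q \<in> set xs"
proof -
  have "p \<notin> set xs \<Longrightarrow> walk_flow xs p q = 0"
    by (induction xs p q rule: walk_flow.induct) simp_all
  moreover have "q \<notin> set xs \<Longrightarrow> walk_flow xs p q = 0"
    by (induction xs p q rule: walk_flow.induct) simp_all
  ultimately show ?thesis
    using assms by blast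
qed

lemma abs_walk_flow_le: "\<bar>walk_flow xs p q\<bar> \<le> length xs"
proof (induction xs p q rule: walk_flow.induct)
  case (1 x y xs p q)
  have "\<bar>(if A then 1 else 0) - (if B then 1 else 0 :: real)\<bar> \<le> 1" for A B
    by (cases A; cases B) simp_all
  moreover have "real (length (x # y # xs)) = 1 + real (length (y # xs))"
    by simp
  ultimately show ?case
    unfolding walk_flow.simps
    using "1" abs_triangle_ineq[of "(if p = x \<and> q = y then 1 else 0) - (if p = y \<and> q = x then 1 else 0)"
        "walk_flow (y # xs) p q"]
    by (smt (verit))
qed simp_all

lemma walk_flow_divergence:
  assumes "symp E" "locally_finite E" "walk E xs"
  shows "(\<Sum>q | E p q. walk_flow xs p q) = (if p = hd xs then 1 else 0) - (if p = last xs then 1 else 0)"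
  using assms(3)
proof (induction xs rule: induct_list012)
  case (3 x y zs)
  have fin: "finite {q. E p q}"
    using assms(2) by (simp add: locally_finite_def)
  have "E x y" "E y x"
    using "3.prems" sympD[OF assms(1)] by auto
  then have "(\<Sum>q | E p q. if p = x \<and> q = y then 1 else 0) = (if p = x then 1 else 0 :: real)"
    "(\<Sum>q | E p q. if p = y \<and> q = x then 1 else 0) = (if p = y then 1 else 0 :: real)"
    using fin by (cases "p = x"; cases "p = y"; simp)+
  then have "(\<Sum>q | E p q. walk_flow (x # y # zs) p q)
      = (if p = x then 1 else 0) - (if p = y then 1 else 0) + (\<Sum>q | E p q. walk_flow (y # zs) p q)"
    by (simp add: sum.distrib sum_subtractf)
  then show ?case
    using "3.IH" "3.prems" by simp
qed (auto simp: walk_def)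

lemma finite_energy_walk_flow: "finite_energy E (walk_flow xs)"
  unfolding finite_energy_def
proof (intro exI allI impI)
  fix Q :: "('a \<times> 'a) set"
  assume "finite Q \<and> Q \<subseteq> {(x, y). E x y}"
  then have "(\<Sum>(p, q)\<in>Q. (walk_flow xs p q)\<^sup>2) = (\<Sum>(p, q)\<in>Q \<inter> set xs \<times> set xs. (walk_flow xs p q)\<^sup>2)"
    by (intro sum.mono_neutral_right) (auto dest: walk_flow_nonzero_imp_mem)
  also have "\<dots> \<le> (\<Sum>(p, q)\<in>set xs \<times> set xs. (walk_flow xs p q)\<^sup>2)"
    by (intro sum_mono2) auto
  finally show "(\<Sum>(p, q)\<in>Q. (walk_flow xs p q)\<^sup>2) \<le> (\<Sum>(p, q)\<in>set xs \<times> set xs. (walk_flow xs p q)\<^sup>2)" .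
qed

lemma finite_energy_add:
  assumes "finite_energy E \<theta>" "finite_energy E \<eta>"
  shows "finite_energy E (\<lambda>x y. \<theta> x y + \<eta> x y)"
proof -
  obtain K L where
    K: "\<And>Q. finite Q \<and> Q \<subseteq> {(x, y). E x y} \<Longrightarrow> (\<Sum>(x, y)\<in>Q. (\<theta> x y)\<^sup>2) \<le> K" and
    L: "\<And>Q. finite Q \<and> Q \<subseteq> {(x, y). E x y} \<Longrightarrow> (\<Sum>(x, y)\<in>Q. (\<eta> x y)\<^sup>2) \<le> L"
    using assms unfolding finite_energy_def by blast
  have sq: "(u + v)\<^sup>2 \<le> 2 * u\<^sup>2 + 2 * v\<^sup>2" for u v :: real
    using sum_squares_bound[of u v] by (simp add: power2_sum)
  have "(\<Sum>(x, y)\<in>Q. (\<theta> x y + \<eta> x y)\<^sup>2) \<le> 2 * K + 2 * L"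
    if "finite Q \<and> Q \<subseteq> {(x, y). E x y}" for Q
  proof -
    have "(\<Sum>(x, y)\<in>Q. (\<theta> x y + \<eta> x y)\<^sup>2) \<le> (\<Sum>(x, y)\<in>Q. 2 * (\<theta> x y)\<^sup>2 + 2 * (\<eta> x y)\<^sup>2)"
      using sq by (intro sum_mono) (simp add: split_def)
    also have "\<dots> = 2 * (\<Sum>(x, y)\<in>Q. (\<theta> x y)\<^sup>2) + 2 * (\<Sum>(x, y)\<in>Q. (\<eta> x y)\<^sup>2)"
      by (simp add: split_def sum.distrib sum_distrib_left)
    finally show ?thesis
      using K[OF that] L[OF that] by linarith
  qed
  then show ?thesis
    unfolding finite_energy_def by blast
qed

lemma unit_flow_add_walk_flow:
  assumes "unit_flow E a \<theta>" "symp E" "locally_finite E" "walk E xs" "hd xs = v" "last xs = a"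
  shows "unit_flow E v (\<lambda>x y. \<theta> x y + walk_flow xs x y)"
  unfolding unit_flow_def
proof (intro conjI allI impI)
  show "\<theta> y x + walk_flow xs y x = - (\<theta> x y + walk_flow xs x y)" if "E x y" for x y
    using unit_flow_antisym[OF assms(1) that] by (simp add: walk_flow_antisym[of xs y x])
  show "(\<Sum>y | E x y. \<theta> x y + walk_flow xs x y) = (if x = v then 1 else 0)" for x
    using unit_flow_divergence[OF assms(1), of x] walk_flow_divergence[OF assms(2-4), of x] assms(5,6)
    by (simp add: sum.distrib)
qed

section \<open>The binary tree\<close>

lemma symp_tree_adj: "symp tree_adj"
  by (auto simp: symp_def tree_adj_def)

lemma tree_neighbours_subset: "{w. tree_adj u w} \<subseteq> {True # u, False # u, tl u}"
  by (auto simp: tree_adj_def)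

lemma locally_finite_tree_adj: "locally_finite tree_adj"
  unfolding locally_finite_def using tree_neighbours_subset finite_subset by blast

lemma card_tree_neighbours_le: "card {w. tree_adj u w} \<le> 3"
proof -
  have "card {w. tree_adj u w} \<le> card {True # u, False # u, tl u}"
    by (intro card_mono tree_neighbours_subset) simp
  also have "\<dots> \<le> 3"
    by (simp add: card_insert_if)
  finally show ?thesis .
qed

lemma tree_walk_to_root: "\<exists>xs. walk tree_adj xs \<and> hd xs = u \<and> last xs = []"
proof (induction u)
  case Nil
  then show ?case
    by (intro exI[of _ "[[]]"]) simp
next
  case (Cons b u)
  then obtain xs where "walk tree_adj (u # xs)" "last (u # xs) = []"
    by (metis list.collapse walk_not_Nil)
  moreover have "tree_adj (b # u) u"
    by (simp add: tree_adj_def)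
  ultimately show ?case
    by (intro exI[of _ "(b # u) # u # xs"]) simp
qed

lemma tree_walk_exists: "\<exists>xs. walk tree_adj xs \<and> hd xs = u \<and> last xs = v"
proof -
  obtain xs ys where "walk tree_adj xs" "hd xs = u" "last xs = []"
    and "walk tree_adj ys" "hd ys = v" "last ys = []"
    using tree_walk_to_root by metis
  then show ?thesis
    using walk_joinE[OF symp_tree_adj, of xs ys] by metis
qed

lemma gdist_tree_child: "gdist tree_adj u (b # u) = 1"
proof -
  have "walk tree_adj [u, b # u]"
    by (simp add: tree_adj_def)
  then have "gdist tree_adj u (b # u) \<le> 1"
    using gdist_le_walk[of tree_adj "[u, b # u]"] by simp
  moreover have "gdist tree_adj u (b # u) \<noteq> 0"
  proof
    assume "gdist tree_adj u (b # u) = 0"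
    then show False
      using \<open>walk tree_adj [u, b # u]\<close>
      by (rule_tac shortest_walkE[of tree_adj "[u, b # u]" u "b # u"]) (auto simp: length_Suc_conv)
  qed
  ultimately show ?thesis
    by simp
qed

text \<open>A tree edge is encoded as a pair \<open>(u, b)\<close>, standing for the edge from \<open>u\<close> to its
  child \<open>b # u\<close>; \<open>tree_flow u\<close> is the flow through either edge from \<open>u\<close> to a child.\<close>

definition tree_flow :: "bool list \<Rightarrow> real" where
  "tree_flow u = (1 / 2) ^ Suc (length u)"

lemma tree_flow_energy_le:
  fixes F :: "(bool list \<times> bool) set"
  assumes "finite F"
  shows "(\<Sum>(u, b)\<in>F. (tree_flow u)\<^sup>2) \<le> 1"
proof -
  define m where "m = Max ((\<lambda>(u, b). length u) ` F)"
  have m: "length u \<le> m" if "(u, b) \<in> F" for u b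
    unfolding m_def using assms that by (intro Max_ge) force+
  define level where "level k = {u :: bool list. length u = k}" for k
  have fin_level: "finite (level k)" and card_level: "card (level k) = 2 ^ k" for k
    using finite_lists_length_eq[of "UNIV :: bool set" k] card_lists_length_eq[of "UNIV :: bool set" k]
    by (simp_all add: level_def)
  have "(\<Sum>(u, b)\<in>F. (tree_flow u)\<^sup>2) \<le> (\<Sum>(u, b)\<in>(\<Union>k\<le>m. level k) \<times> (UNIV :: bool set). (tree_flow u)\<^sup>2)"
    using m fin_level by (intro sum_mono2) (auto simp: level_def)
  also have "\<dots> = (\<Sum>u\<in>(\<Union>k\<le>m. level k). 2 * (tree_flow u)\<^sup>2)"
    by (simp add: sum.cartesian_product[symmetric])
  also have "\<dots> = (\<Sum>k\<le>m. \<Sum>u\<in>level k. 2 * (tree_flow u)\<^sup>2)"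
    using fin_level by (intro sum.UNION_disjoint) (auto simp: level_def)
  also have "\<dots> = (\<Sum>k\<le>m. (1 / 2) ^ Suc k)"
  proof (rule sum.cong)
    fix k
    have "(\<Sum>u\<in>level k. 2 * (tree_flow u)\<^sup>2) = 2 ^ k * (2 * ((1 / 2) ^ Suc k)\<^sup>2)"
      by (simp add: level_def tree_flow_def card_level[unfolded level_def])
    also have "\<dots> = (1 / 2) ^ Suc k"
      by (simp add: power2_eq_square power_mult_distrib[symmetric] field_simps)
    finally show "(\<Sum>u\<in>level k. 2 * (tree_flow u)\<^sup>2) = (1 / 2) ^ Suc k" .
  qed simp
  also have "\<dots> = 1 - (1 / 2) ^ Suc m"
    by (induction m) simp_all
  also have "\<dots> \<le> 1"
    by simp
  finally show ?thesis .
qed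

lemma tree_flow_net_outflow:
  assumes "finite U"
  shows "(\<Sum>(u, b)\<in>U \<times> (UNIV :: bool set). tree_flow u) - (\<Sum>(u, b)\<in>{(u, b). b # u \<in> U}. tree_flow u)
    = (if [] \<in> U then 1 else 0)"
proof -
  have "(\<Sum>(u, b)\<in>U \<times> (UNIV :: bool set). tree_flow u) = (\<Sum>u\<in>U. (1 / 2) ^ length u)"
    by (simp add: sum.cartesian_product[symmetric] tree_flow_def)
  moreover have "(\<Sum>(u, b)\<in>{(u, b). b # u \<in> U}. tree_flow u) = (\<Sum>w\<in>U - {[]}. (1 / 2) ^ length w)"
    by (rule sum.reindex_bij_witness[where i = "\<lambda>w. (tl w, hd w)" and j = "\<lambda>(u, b). b # u"])
      (auto simp: tree_flow_def)
  ultimately show ?thesis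
    using assms by (simp add: sum_diff1)
qed

section \<open>Pushing the tree flow forward\<close>

locale coarse_tree_embedding =
  fixes E :: "'a \<Rightarrow> 'a \<Rightarrow> bool" and D :: nat and f :: "bool list \<Rightarrow> 'a" and L R :: nat
  assumes symp: "symp E"
    and locally_finite: "locally_finite E"
    and degree_le: "\<And>v. card {w. E v w} \<le> D"
    and edge_walk: "\<And>u b. \<exists>xs. walk E xs \<and> hd xs = f u \<and> last xs = f (b # u) \<and> length xs \<le> Suc L"
    and gdist_le_if_images_close: "\<And>u u'. gdist E (f u) (f u') \<le> 2 * L \<Longrightarrow> gdist tree_adj u u' \<le> R"
begin

definition edge_path :: "bool list \<Rightarrow> bool \<Rightarrow> 'a list" where
  "edge_path u b = (SOME xs. walk E xs \<and> hd xs = f u \<and> last xs = f (b # u) \<and> length xs \<le> Suc L)"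

lemma edge_path:
  "walk E (edge_path u b)" "hd (edge_path u b) = f u" "last (edge_path u b) = f (b # u)"
  "length (edge_path u b) \<le> Suc L"
  using someI_ex[OF edge_walk[of u b]] unfolding edge_path_def by blast+

definition edges_through :: "'a \<Rightarrow> (bool list \<times> bool) set" where
  "edges_through p = {(u, b). p \<in> set (edge_path u b)}"

lemma walk_to_vertex_on_edge_pathE:
  assumes "(u, b) \<in> edges_through p"
  obtains xs where "walk E xs" "hd xs = f u" "last xs = p" "length xs \<le> Suc L"
proof -
  obtain i where i: "i < length (edge_path u b)" "edge_path u b ! i = p"
    using assms by (auto simp: edges_through_def in_set_conv_nth)
  show ?thesis
  proof
    show "walk E (take (Suc i) (edge_path u b))"
      using edge_path(1) by (rule walk_take) simp
    show "hd (take (Suc i) (edge_path u b)) = f u"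
      using edge_path(2) by simp
    show "last (take (Suc i) (edge_path u b)) = p"
      using i by (simp add: take_Suc_conv_app_nth)
    show "length (take (Suc i) (edge_path u b)) \<le> Suc L"
      using edge_path(4)[of u b] by (simp add: min_le_iff_disj)
  qed
qed

lemma gdist_edges_through_le:
  assumes "(u, b) \<in> edges_through p" "(u', b') \<in> edges_through p"
  shows "gdist tree_adj u u' \<le> R"
proof -
  obtain xs ys where "walk E xs" "hd xs = f u" "last xs = p" "length xs \<le> Suc L"
    and "walk E ys" "hd ys = f u'" "last ys = p" "length ys \<le> Suc L"
    using walk_to_vertex_on_edge_pathE[OF assms(1)] walk_to_vertex_on_edge_pathE[OF assms(2)] by metis
  moreover obtain zs where "walk E zs" "hd zs = f u" "last zs = f u'"
    and "length zs = length xs + length ys - 1"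
    using walk_joinE[OF symp \<open>walk E xs\<close> \<open>walk E ys\<close>] calculation by metis
  ultimately have "gdist E (f u) (f u') \<le> 2 * L"
    using gdist_le_walk[of E zs "f u" "f u'"] by linarith
  then show ?thesis
    by (rule gdist_le_if_images_close)
qed

lemma edges_through_subset:
  assumes "(u0, b0) \<in> edges_through p"
  shows "edges_through p \<subseteq> last ` (\<Union>k\<le>R. walks_from tree_adj k u0) \<times> UNIV"
proof (intro subsetI)
  fix e
  assume "e \<in> edges_through p"
  then obtain u b where e: "e = (u, b)" "(u, b) \<in> edges_through p"
    by (cases e) auto
  obtain xs where "walk tree_adj xs" "hd xs = u0" "last xs = u"
    and "length xs = Suc (gdist tree_adj u0 u)"
    using tree_walk_exists shortest_walkE by metis
  moreover have "gdist tree_adj u0 u \<le> R"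
    using assms e(2) by (rule gdist_edges_through_le)
  ultimately have "xs \<in> (\<Union>k\<le>R. walks_from tree_adj k u0)"
    by (auto simp: walks_from_def)
  then show "e \<in> last ` (\<Union>k\<le>R. walks_from tree_adj k u0) \<times> UNIV"
    using e \<open>last xs = u\<close> by auto
qed

lemma finite_edges_through: "finite (edges_through p)"
proof (cases "edges_through p = {}")
  case False
  then obtain u0 b0 where "(u0, b0) \<in> edges_through p"
    by auto
  moreover have "finite (last ` (\<Union>k\<le>R. walks_from tree_adj k u0) \<times> (UNIV :: bool set))"
    using finite_walks_from[OF locally_finite_tree_adj] by simp
  ultimately show ?thesis
    using edges_through_subset finite_subset by metis
qed simp

lemma card_edges_through_le: "card (edges_through p) \<le> 2 * (\<Sum>k\<le>R. 3 ^ k)"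
proof (cases "edges_through p = {}")
  case False
  then obtain u0 b0 where "(u0, b0) \<in> edges_through p"
    by auto
  define W where "W = (\<Union>k\<le>R. walks_from tree_adj k u0)"
  have "finite W"
    using finite_walks_from[OF locally_finite_tree_adj] by (simp add: W_def)
  have "card (edges_through p) \<le> card (last ` W \<times> (UNIV :: bool set))"
    using edges_through_subset[OF \<open>(u0, b0) \<in> edges_through p\<close>] \<open>finite W\<close>
    by (intro card_mono) (auto simp: W_def)
  also have "\<dots> \<le> 2 * card W"
    using card_image_le[OF \<open>finite W\<close>, of last] by (simp add: card_cartesian_product)
  also have "card W \<le> (\<Sum>k\<le>R. card (walks_from tree_adj k u0))"
    unfolding W_def by (rule card_UN_le) simp
  also have "\<dots> \<le> (\<Sum>k\<le>R. 3 ^ k)"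
    by (intro sum_mono card_walks_from_le locally_finite_tree_adj card_tree_neighbours_le)
  finally show ?thesis
    by simp
qed simp

definition pushed_flow :: "'a \<Rightarrow> 'a \<Rightarrow> real" where
  "pushed_flow p q = (\<Sum>(u, b)\<in>edges_through p. tree_flow u * walk_flow (edge_path u b) p q)"

lemma pushed_flow_eq_sum_common:
  "pushed_flow p q = (\<Sum>(u, b)\<in>edges_through p \<inter> edges_through q. tree_flow u * walk_flow (edge_path u b) p q)"
  unfolding pushed_flow_def using finite_edges_through
  by (intro sum.mono_neutral_right) (auto simp: edges_through_def dest: walk_flow_nonzero_imp_mem)

lemma pushed_flow_antisym: "pushed_flow q p = - pushed_flow p q"
  by (simp add: pushed_flow_eq_sum_common[of q p] pushed_flow_eq_sum_common[of p q] Int_commute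
      walk_flow_antisym[of _ q p] split_def sum_negf)

lemma pushed_flow_divergence: "(\<Sum>q | E p q. pushed_flow p q) = (if p = f [] then 1 else 0)"
proof -
  define U where "U = f -` {p}"
  have U_edges: "U \<times> UNIV \<subseteq> edges_through p"
    using edge_path(2) hd_in_set[OF walk_not_Nil[OF edge_path(1)]] by (fastforce simp: U_def edges_through_def)
  have child_edges: "{(u, b). b # u \<in> U} \<subseteq> edges_through p"
    using edge_path(3) last_in_set[OF walk_not_Nil[OF edge_path(1)]] by (fastforce simp: U_def edges_through_def)
  have "finite U"
    using finite_subset[OF U_edges finite_edges_through] by (auto simp: finite_cartesian_product_iff)
  have "(\<Sum>q | E p q. pushed_flow p q)
      = (\<Sum>(u, b)\<in>edges_through p. tree_flow u * (\<Sum>q | E p q. walk_flow (edge_path u b) p q))"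
    unfolding pushed_flow_def by (subst sum.swap) (simp add: split_def sum_distrib_left)
  also have "\<dots> = (\<Sum>(u, b)\<in>edges_through p. tree_flow u * ((if p = f u then 1 else 0) - (if p = f (b # u) then 1 else 0)))"
    by (simp add: walk_flow_divergence[OF symp locally_finite edge_path(1)] edge_path(2,3))
  also have "\<dots> = (\<Sum>(u, b)\<in>edges_through p. if p = f u then tree_flow u else 0)
      - (\<Sum>(u, b)\<in>edges_through p. if p = f (b # u) then tree_flow u else 0)"
    by (simp add: right_diff_distrib sum_subtractf split_def if_distrib[of "\<lambda>x. _ * x"] cong: if_cong)
  also have "(\<Sum>(u, b)\<in>edges_through p. if p = f u then tree_flow u else 0) = (\<Sum>(u, b)\<in>U \<times> (UNIV :: bool set). tree_flow u)"
    using U_edges by (intro sum.mono_neutral_cong_right finite_edges_through) (auto simp: U_def split: if_splits)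
  also have "(\<Sum>(u, b)\<in>edges_through p. if p = f (b # u) then tree_flow u else 0)
      = (\<Sum>(u, b)\<in>{(u, b). b # u \<in> U}. tree_flow u)"
    using child_edges by (intro sum.mono_neutral_cong_right finite_edges_through) (auto simp: U_def split: if_splits)
  also have "(\<Sum>(u, b)\<in>U \<times> (UNIV :: bool set). tree_flow u) - (\<Sum>(u, b)\<in>{(u, b). b # u \<in> U}. tree_flow u)
      = (if [] \<in> U then 1 else 0)"
    using \<open>finite U\<close> by (rule tree_flow_net_outflow)
  also have "\<dots> = (if p = f [] then 1 else 0)"
    by (auto simp: U_def)
  finally show ?thesis .
qed

lemma unit_flow_pushed_flow: "unit_flow E (f []) pushed_flow"
  unfolding unit_flow_def using pushed_flow_antisym pushed_flow_divergence by blast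

lemma pushed_flow_sq_le:
  "(pushed_flow p q)\<^sup>2 \<le> card (edges_through p) * (Suc L)\<^sup>2 * (\<Sum>(u, b)\<in>edges_through p. (tree_flow u)\<^sup>2)"
proof -
  have "(pushed_flow p q)\<^sup>2
      \<le> (\<Sum>(u, b)\<in>edges_through p. (tree_flow u * walk_flow (edge_path u b) p q)\<^sup>2) * card (edges_through p)"
    unfolding pushed_flow_def using sum_squared_le_sum_of_squares by (simp add: split_def)
  also have "\<dots> \<le> (\<Sum>(u, b)\<in>edges_through p. (tree_flow u)\<^sup>2 * (Suc L)\<^sup>2) * card (edges_through p)"
  proof (intro mult_right_mono sum_mono)
    fix e
    assume "e \<in> edges_through p"
    obtain u b where "e = (u, b)"
      by (cases e)
    have "\<bar>walk_flow (edge_path u b) p q\<bar> \<le> Suc L"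
      using abs_walk_flow_le[of "edge_path u b" p q] edge_path(4)[of u b] by linarith
    then have "(walk_flow (edge_path u b) p q)\<^sup>2 \<le> (Suc L)\<^sup>2"
      by (metis abs_le_square_iff abs_of_nat of_nat_power)
    then show "(case e of (u, b) \<Rightarrow> (tree_flow u * walk_flow (edge_path u b) p q)\<^sup>2)
        \<le> (case e of (u, b) \<Rightarrow> (tree_flow u)\<^sup>2 * (Suc L)\<^sup>2)"
      by (simp add: \<open>e = (u, b)\<close> power_mult_distrib mult_left_mono)
  qed simp
  also have "\<dots> = card (edges_through p) * (Suc L)\<^sup>2 * (\<Sum>(u, b)\<in>edges_through p. (tree_flow u)\<^sup>2)"
    by (simp add: sum_distrib_left split_def mult_ac)
  finally show ?thesis .
qed

lemma card_edge_pairs_through_le: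
  assumes "Q \<subseteq> {(x, y). E x y}"
  shows "card {(p, q) \<in> Q. e \<in> edges_through p} \<le> Suc L * D"
proof -
  obtain u b where e: "e = (u, b)"
    by (cases e)
  have fin: "finite {q. E p q}" for p
    using locally_finite by (simp add: locally_finite_def)
  have "card {(p, q) \<in> Q. e \<in> edges_through p} \<le> card (SIGMA p:set (edge_path u b). {q. E p q})"
    using assms fin by (intro card_mono) (auto simp: e edges_through_def)
  also have "\<dots> = (\<Sum>p\<in>set (edge_path u b). card {q. E p q})"
    using fin by (intro card_SigmaI) auto
  also have "\<dots> \<le> card (set (edge_path u b)) * D"
    using sum_bounded_above[of "set (edge_path u b)" "\<lambda>p. card {q. E p q}" D] degree_le by simp
  also have "\<dots> \<le> Suc L * D"
    using card_length[of "edge_path u b"] edge_path(4)[of u b] by (intro mult_right_mono) auto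
  finally show ?thesis .
qed

lemma pushed_flow_energy_le:
  assumes "finite Q" "Q \<subseteq> {(x, y). E x y}"
  shows "(\<Sum>z\<in>Q. (pushed_flow (fst z) (snd z))\<^sup>2) \<le> 2 * (\<Sum>k\<le>R. 3 ^ k) * (Suc L)\<^sup>2 * (Suc L * D)"
proof -
  define M :: real where "M = 2 * (\<Sum>k\<le>R. 3 ^ k)"
  define T where "T = (\<Union>z\<in>Q. edges_through (fst z))"
  have "finite T"
    using \<open>finite Q\<close> finite_edges_through by (auto simp: T_def)
  have "(\<Sum>z\<in>Q. \<Sum>e\<in>edges_through (fst z). (tree_flow (fst e))\<^sup>2)
      = (\<Sum>z\<in>Q. \<Sum>e\<in>{e \<in> T. e \<in> edges_through (fst z)}. (tree_flow (fst e))\<^sup>2)"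
  proof (rule sum.cong)
    fix z
    assume "z \<in> Q"
    then have "{e \<in> T. e \<in> edges_through (fst z)} = edges_through (fst z)"
      by (auto simp: T_def)
    then show "(\<Sum>e\<in>edges_through (fst z). (tree_flow (fst e))\<^sup>2)
        = (\<Sum>e\<in>{e \<in> T. e \<in> edges_through (fst z)}. (tree_flow (fst e))\<^sup>2)"
      by simp
  qed simp
  also have "\<dots> = (\<Sum>e\<in>T. \<Sum>z\<in>{z \<in> Q. e \<in> edges_through (fst z)}. (tree_flow (fst e))\<^sup>2)"
    by (rule sum.swap_restrict[OF \<open>finite Q\<close> \<open>finite T\<close>])
  also have "\<dots> \<le> (\<Sum>e\<in>T. (Suc L * D) * (tree_flow (fst e))\<^sup>2)"
  proof (rule sum_mono)
    fix e
    have "card {z \<in> Q. e \<in> edges_through (fst z)} \<le> Suc L * D"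
      using card_edge_pairs_through_le[OF assms(2), of e] by (simp add: split_def)
    then have "card {z \<in> Q. e \<in> edges_through (fst z)} * (tree_flow (fst e))\<^sup>2
        \<le> real (Suc L * D) * (tree_flow (fst e))\<^sup>2"
      by (intro mult_right_mono of_nat_mono) simp_all
    then show "(\<Sum>z\<in>{z \<in> Q. e \<in> edges_through (fst z)}. (tree_flow (fst e))\<^sup>2)
        \<le> (Suc L * D) * (tree_flow (fst e))\<^sup>2"
      by (simp only: sum_constant)
  qed
  also have "\<dots> = (Suc L * D) * (\<Sum>e\<in>T. (tree_flow (fst e))\<^sup>2)"
    by (rule sum_distrib_left[symmetric])
  also have "\<dots> \<le> Suc L * D"
    using tree_flow_energy_le[OF \<open>finite T\<close>]
    by (intro mult_right_le_one_le) (auto simp: split_def intro: sum_nonneg)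
  finally have multiplicity: "(\<Sum>z\<in>Q. \<Sum>e\<in>edges_through (fst z). (tree_flow (fst e))\<^sup>2) \<le> Suc L * D" .
  have "(pushed_flow (fst z) (snd z))\<^sup>2 \<le> M * (Suc L)\<^sup>2 * (\<Sum>e\<in>edges_through (fst z). (tree_flow (fst e))\<^sup>2)"
    for z :: "'a \<times> 'a"
  proof -
    have "real (card (edges_through (fst z))) \<le> M"
      unfolding M_def using of_nat_mono[OF card_edges_through_le[of "fst z"]] by simp
    then have "card (edges_through (fst z)) * (Suc L)\<^sup>2 * (\<Sum>e\<in>edges_through (fst z). (tree_flow (fst e))\<^sup>2)
        \<le> M * (Suc L)\<^sup>2 * (\<Sum>e\<in>edges_through (fst z). (tree_flow (fst e))\<^sup>2)"
      by (intro mult_right_mono) (auto intro: sum_nonneg)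
    with pushed_flow_sq_le[of "fst z" "snd z", unfolded split_def] show ?thesis
      by (rule order_trans)
  qed
  then have "(\<Sum>z\<in>Q. (pushed_flow (fst z) (snd z))\<^sup>2)
      \<le> M * (Suc L)\<^sup>2 * (\<Sum>z\<in>Q. \<Sum>e\<in>edges_through (fst z). (tree_flow (fst e))\<^sup>2)"
    by (simp add: sum_distrib_left sum_mono)
  also have "\<dots> \<le> M * (Suc L)\<^sup>2 * (Suc L * D)"
    using multiplicity by (rule mult_left_mono) (simp add: M_def sum_nonneg)
  finally show ?thesis
    by (simp add: M_def)
qed

lemma finite_energy_pushed_flow: "finite_energy E pushed_flow"
  unfolding finite_energy_def split_def
  by (rule exI, intro allI impI, rule pushed_flow_energy_le) auto

theorem return_prob_lt_1:
  assumes "walk E xs" "hd xs = v" "last xs = f []"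
  shows "return_prob E v < 1"
  using symp locally_finite
proof (rule return_prob_lt_1_if_finite_energy_flow)
  show "unit_flow E v (\<lambda>x y. pushed_flow x y + walk_flow xs x y)"
    using unit_flow_pushed_flow symp locally_finite assms by (rule unit_flow_add_walk_flow)
  show "finite_energy E (\<lambda>x y. pushed_flow x y + walk_flow xs x y)"
    using finite_energy_pushed_flow finite_energy_walk_flow by (rule finite_energy_add)
qed

end

lemma simple_graph_bounded_degreeE:
  assumes "simple_graph V E" "bounded_degree V E"
  obtains D where "symp E" "locally_finite E" "\<And>v. card {w. E v w} \<le> D"
proof -
  obtain D where D: "\<forall>v\<in>V. finite {w. E v w} \<and> card {w. E v w} \<le> D"
    using assms(2) unfolding bounded_degree_def by blast
  have no_edges: "{w. E v w} = {}" if "v \<notin> V" for v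
    using assms(1) that unfolding simple_graph_def by blast
  show ?thesis
  proof
    show "symp E"
      using assms(1) unfolding simple_graph_def symp_def by blast
    show "locally_finite E"
      unfolding locally_finite_def using D no_edges by (metis finite.emptyI)
    show "card {w. E v w} \<le> D" for v
      using D no_edges by (cases "v \<in> V") auto
  qed
qed

lemma coarse_tree_embedding_if_quasi_isometric:
  fixes C :: real
  assumes "symp E" "locally_finite E" "\<And>v. card {w. E v w} \<le> D"
    and "connected_graph V E" "\<And>u. f u \<in> V" "C > 0"
    and qi: "\<And>u v. real (gdist tree_adj u v) / C - C \<le> real (gdist E (f u) (f v))
              \<and> real (gdist E (f u) (f v)) \<le> C * real (gdist tree_adj u v) + C"
  defines "L \<equiv> nat \<lceil>2 * C\<rceil>"
  shows "coarse_tree_embedding E D f L (nat \<lceil>C * (2 * real L + C)\<rceil>)"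
proof
  show "\<exists>xs. walk E xs \<and> hd xs = f u \<and> last xs = f (b # u) \<and> length xs \<le> Suc L" for u b
  proof -
    obtain xs where "walk E xs" "hd xs = f u" "last xs = f (b # u)"
      using assms(4,5) unfolding connected_graph_def by blast
    then obtain ys where ys: "walk E ys" "hd ys = f u" "last ys = f (b # u)"
      and "length ys = Suc (gdist E (f u) (f (b # u)))"
      by (rule shortest_walkE)
    moreover have "real (gdist E (f u) (f (b # u))) \<le> 2 * C"
      using qi[of u "b # u"] by (simp add: gdist_tree_child)
    then have "gdist E (f u) (f (b # u)) \<le> L"
      unfolding L_def by linarith
    ultimately show ?thesis
      by auto
  qed
  show "gdist tree_adj u u' \<le> nat \<lceil>C * (2 * real L + C)\<rceil>" if "gdist E (f u) (f u') \<le> 2 * L" for u u'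
  proof -
    have "real (gdist tree_adj u u') / C - C \<le> 2 * L"
      using qi[of u u'] that by linarith
    then have "real (gdist tree_adj u u') \<le> C * (2 * real L + C)"
      using \<open>C > 0\<close> by (simp add: field_simps)
    then show ?thesis
      by linarith
  qed
qed (use assms(1-3) in auto)

theorem proposition5p3:
  fixes V :: "'a set" and E :: "'a \<Rightarrow> 'a \<Rightarrow> bool"
    and f :: "bool list \<Rightarrow> 'a" and C :: real
  assumes "simple_graph V E"
    and "connected_graph V E"
    and "bounded_degree V E"
    and "\<forall>u. f u \<in> V"
    and "C > 0"
    and "\<forall>u v. real (gdist tree_adj u v) / C - C \<le> real (gdist E (f u) (f v))
              \<and> real (gdist E (f u) (f v)) \<le> C * real (gdist tree_adj u v) + C"
  shows "transient V E"
proof -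
  obtain D where graph: "symp E" "locally_finite E" "\<And>v. card {w. E v w} \<le> D"
    using simple_graph_bounded_degreeE[OF assms(1,3)] by metis
  interpret coarse_tree_embedding E D f "nat \<lceil>2 * C\<rceil>" "nat \<lceil>C * (2 * real (nat \<lceil>2 * C\<rceil>) + C)\<rceil>"
    using graph assms(2,4-6) by (intro coarse_tree_embedding_if_quasi_isometric) auto
  show ?thesis
    unfolding transient_def
  proof
    fix v
    assume "v \<in> V"
    then obtain xs where "walk E xs" "hd xs = v" "last xs = f []"
      using assms(2,4) unfolding connected_graph_def by blast
    then show "return_prob E v < 1"
      by (rule return_prob_lt_1)
  qed
qed

end
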